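(* For integers $n\ge1$ and $m\ge n$, let $N=2^{nm}n$ and let $P$ be the set of the first $N$ primes. For each $1\le i\le n$, $1\le j\le m$, choose a random subset $P'_{ij}\subseteq P$ by including each $p\in P$ independently with probability $1/2$ (independently over all $p,i,j$), and set $A_{ij}=\prod_{p\in P'_{ij}}p$. Then: (i) the random $n\times m$ integer matrix $A=(A_{ij})$ is $\tfrac12$-balanced; (ii) for all sufficiently large $n$ (and all $m\ge n$), $|A_{ij}|\le e^{3^{nm}}$ for all $i,j$ almost surely; (iii) $\mathbb{P}(A:\mathbb{Z}^m\to\mathbb{Z}^n\text{ is surjective})\le e^{-n}$, which tends to $0$ as $n\to\infty$.
   Context: A random variable $y$ taking values in $\mathbb{Z}$ is called $\epsilon$-balanced if for every prime $p$ and every residue $r\in\mathbb{Z}/p\mathbb{Z}$ we have $\mathbb{P}(y\equiv r \pmod p)\le 1-\epsilon$. A random matrix is $\epsilon$-balanced if its entries are independent and each entry is $\epsilon$-balanced. *)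

theory Defs
  imports "HOL-Probability.Probability" "HOL-Number_Theory.Number_Theory"
begin

definition first_primes :: "nat \<Rightarrow> nat set" where
  "first_primes N = {p. prime p \<and> card {q. prime q \<and> q < p} < N}"

definition eps_balanced :: "real \<Rightarrow> int pmf \<Rightarrow> bool" where
  "eps_balanced eps Y \<longleftrightarrow>
     (\<forall>p::nat. \<forall>r::int. prime p \<longrightarrow>
        measure_pmf.prob Y {y. [y = r] (mod int p)} \<le> 1 - eps)"

definition eps_balanced_matrix ::
  "real \<Rightarrow> 'w pmf \<Rightarrow> nat \<Rightarrow> nat \<Rightarrow> ('w \<Rightarrow> nat \<Rightarrow> nat \<Rightarrow> int) \<Rightarrow> bool" where
  "eps_balanced_matrix eps M n m X \<longleftrightarrow>
     prob_space.indep_vars (measure_pmf M) (\<lambda>_. count_space UNIV)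
        (\<lambda>(i,j) w. X w i j) ({..<n} \<times> {..<m}) \<and>
     (\<forall>i<n. \<forall>j<m. eps_balanced eps (map_pmf (\<lambda>w. X w i j) M))"

definition coin_space :: "nat \<Rightarrow> nat \<Rightarrow> (nat \<times> nat \<times> nat \<Rightarrow> bool) pmf" where
  "coin_space n m = Pi_pmf ({..<n} \<times> {..<m} \<times> first_primes (2 ^ (n * m) * n)) False
                          (\<lambda>_. bernoulli_pmf (1/2))"

text \<open>A_ij = product of the primes p in P'_ij = {p \<in> P. coin (i,j,p)}.\<close>
definition rand_entry :: "nat \<Rightarrow> nat \<Rightarrow> (nat \<times> nat \<times> nat \<Rightarrow> bool) \<Rightarrow> nat \<Rightarrow> nat \<Rightarrow> int" where
  "rand_entry n m w i j = (\<Prod>p\<in>{p \<in> first_primes (2 ^ (n * m) * n). w (i, j, p)}. int p)"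

definition int_mat_surj :: "nat \<Rightarrow> nat \<Rightarrow> (nat \<Rightarrow> nat \<Rightarrow> int) \<Rightarrow> bool" where
  "int_mat_surj n m A \<longleftrightarrow>
     (\<forall>b :: nat \<Rightarrow> int. \<exists>x :: nat \<Rightarrow> int. \<forall>i<n. (\<Sum>j<m. A i j * x j) = b i)"

end

theory Submission
  imports Defs
begin

text \<open>(i) Modulo a prime \<open>p\<close>, flipping the coin of one prime \<open>q\<close> in an entry changes its
  residue, so every residue has probability at most \<open>1/2\<close>; distinct entries depend on disjoint
  sets of coins and are therefore independent.
  (ii) Legendre's formula bounds the prime powers dividing \<open>2k choose k\<close> by \<open>2k\<close>; comparing
  with \<open>4\<^sup>k\<close> shows that there are at least \<open>N\<close> primes below \<open>2N\<^sup>2\<close>. Hence an entry is at most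
  \<open>(2N\<^sup>2)\<^sup>N\<close>, which is below \<open>exp (3\<^sup>n\<^sup>m)\<close> once \<open>nm \<ge> 30\<close>.
  (iii) If \<open>A\<close> is surjective, no prime divides the whole first row, so for each of the \<open>N\<close> primes
  one of the \<open>m\<close> coins of that row is tails. These events are independent, which gives the bound
  \<open>(1 - 2\<^sup>-\<^sup>m)\<^sup>N \<le> exp (-N/2\<^sup>m) \<le> exp (-n)\<close>.\<close>

section \<open>Chebyshev's bound via the central binomial coefficient\<close>

lemma Suc_div_eq_div_add_dvd:
  fixes n d :: nat
  assumes "0 < d"
  shows "Suc n div d = n div d + (if d dvd Suc n then 1 else 0)"
  using assms by (auto simp: div_Suc dvd_eq_mod_eq_0)

lemma multiplicity_eq_sum_prime_power_dvd:
  fixes p a T :: nat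
  assumes p: "prime p" and a: "0 < a" and aT: "a \<le> T"
  shows "multiplicity p a = (\<Sum>i=1..T. if p ^ i dvd a then 1 else 0)"
proof -
  have "multiplicity p a < 2 ^ multiplicity p a" by (rule less_exp)
  also have "\<dots> \<le> p ^ multiplicity p a" using prime_ge_2_nat[OF p] by (simp add: power_mono)
  also have "\<dots> \<le> a" using a multiplicity_dvd[of p a] by (simp add: dvd_imp_le)
  finally have "multiplicity p a \<le> T" using aT by linarith
  moreover have dvd_iff: "p ^ i dvd a \<longleftrightarrow> i \<le> multiplicity p a" for i
  proof (rule power_dvd_iff_le_multiplicity)
    show "a \<noteq> 0" using a by simp
    show "\<not> is_unit p" using p not_prime_unit by blast
  qed
  ultimately have "{i\<in>{1..T}. p ^ i dvd a} = {1..multiplicity p a}"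
    unfolding dvd_iff by auto
  moreover have "(\<Sum>i=1..T. if p ^ i dvd a then 1 else 0) = card {i\<in>{1..T}. p ^ i dvd a}"
    using sum.inter_filter[of "{1..T}" "\<lambda>_. 1::nat" "\<lambda>i. p ^ i dvd a"] by simp
  ultimately show ?thesis by simp
qed

lemma multiplicity_fact_nat:
  fixes p n T :: nat
  assumes p: "prime p"
  shows "n \<le> T \<Longrightarrow> multiplicity p (fact n :: nat) = (\<Sum>i=1..T. n div p ^ i)"
proof (induction n)
  case 0
  then show ?case by simp
next
  case (Suc n)
  have "multiplicity p (fact (Suc n) :: nat) = multiplicity p (Suc n * fact n)" by simp
  also have "\<dots> = multiplicity p (Suc n) + multiplicity p (fact n :: nat)"
    using p by (intro prime_elem_multiplicity_mult_distrib) auto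
  also have "multiplicity p (Suc n) = (\<Sum>i=1..T. if p ^ i dvd Suc n then 1 else 0)"
    using Suc.prems by (intro multiplicity_eq_sum_prime_power_dvd[OF p]) auto
  also have "multiplicity p (fact n :: nat) = (\<Sum>i=1..T. n div p ^ i)"
    using Suc by simp
  also have "(\<Sum>i=1..T. if p ^ i dvd Suc n then 1 else 0) + (\<Sum>i=1..T. n div p ^ i)
      = (\<Sum>i=1..T. Suc n div p ^ i)"
    using prime_gt_0_nat[OF p]
    by (simp add: Suc_div_eq_div_add_dvd add.commute flip: sum.distrib)
  finally show ?case .
qed

lemma double_div_le:
  fixes k d :: nat
  shows "2 * k div d \<le> 2 * (k div d) + (if d \<le> 2 * k then 1 else 0)"
proof (cases "0 < d \<and> d \<le> 2 * k")
  case True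
  have "k < (k div d + 1) * d" using True div_less_iff_less_mult[of d k "k div d + 1"] by simp
  then have "2 * k < (2 * (k div d) + 2) * d" by (simp add: algebra_simps)
  then have "2 * k div d < 2 * (k div d) + 2" using True by (simp add: div_less_iff_less_mult)
  then show ?thesis using True by simp
qed (auto simp: not_le)

lemma power_card_powers_le:
  fixes b M :: nat
  assumes "1 \<le> b" and "1 \<le> M"
  shows "b ^ card {i\<in>{1..M}. b ^ i \<le> M} \<le> M"
proof (cases "{i\<in>{1..M}. b ^ i \<le> M} = {}")
  case False
  define S where "S = {i\<in>{1..M}. b ^ i \<le> M}"
  have "Max S \<in> S" using False by (intro Max_in) (auto simp: S_def)
  moreover have "S \<subseteq> {1..Max S}" by (auto simp: S_def)
  ultimately have "card S \<le> Max S" using card_mono[of "{1..Max S}" S] by simp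
  then have "b ^ card S \<le> b ^ Max S" by (rule power_increasing[OF _ assms(1)])
  also have "\<dots> \<le> M" using \<open>Max S \<in> S\<close> by (simp add: S_def)
  finally show ?thesis unfolding S_def .
next
  case True
  then show ?thesis using assms(2) by (metis card.empty power_0)
qed

text \<open>By Legendre's formula the multiplicity is the sum of \<open>\<lfloor>2k/p\<^sup>i\<rfloor> - 2\<lfloor>k/p\<^sup>i\<rfloor>\<close>, whose
  summands are 0 or 1, and 0 once \<open>p\<^sup>i > 2k\<close>.\<close>
lemma prime_power_multiplicity_central_binomial_le:
  fixes p k :: nat
  assumes p: "prime p" and k: "1 \<le> k"
  shows "p ^ multiplicity p (2 * k choose k) \<le> 2 * k"
proof -
  define C where "C = 2 * k choose k"
  have "fact k * fact k * C = (fact (2 * k) :: nat)"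
    using binomial_fact_lemma[of k "2 * k"] by (simp add: C_def mult_2)
  then have "multiplicity p (fact (2 * k) :: nat) = 2 * multiplicity p (fact k :: nat) + multiplicity p C"
    using p by (metis prime_elem_multiplicity_mult_distrib fact_nonzero binomial_eq_0_iff
        C_def mult_2 mult_eq_0_iff not_le le_add2 prime_imp_prime_elem)
  moreover have "multiplicity p (fact (2 * k) :: nat) = (\<Sum>i=1..2*k. 2 * k div p ^ i)"
    and "multiplicity p (fact k :: nat) = (\<Sum>i=1..2*k. k div p ^ i)"
    using multiplicity_fact_nat[OF p] by simp_all
  moreover have "(\<Sum>i=1..2*k. 2 * k div p ^ i)
      \<le> (\<Sum>i=1..2*k. 2 * (k div p ^ i) + (if p ^ i \<le> 2 * k then 1 else 0))"
    by (intro sum_mono double_div_le)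
  moreover have "(\<Sum>i=1..2*k. if p ^ i \<le> 2 * k then 1 else 0) = card {i\<in>{1..2*k}. p ^ i \<le> 2 * k}"
    using sum.inter_filter[of "{1..2*k}" "\<lambda>_. 1::nat" "\<lambda>i. p ^ i \<le> 2 * k"] by simp
  ultimately have "multiplicity p C \<le> card {i\<in>{1..2*k}. p ^ i \<le> 2 * k}"
    by (simp add: sum.distrib sum_distrib_left)
  then have "p ^ multiplicity p C \<le> p ^ card {i\<in>{1..2*k}. p ^ i \<le> 2 * k}"
    using prime_gt_0_nat[OF p] by (intro power_increasing) auto
  also have "\<dots> \<le> 2 * k"
    using p k by (intro power_card_powers_le) (auto simp: prime_gt_0_nat Suc_leI)
  finally show ?thesis unfolding C_def .
qed

lemma central_binomial_le_power_card_primes: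
  fixes k :: nat
  assumes k: "1 \<le> k"
  shows "2 * k choose k \<le> (2 * k) ^ card {p. prime p \<and> p \<le> 2 * k}"
proof -
  define C where "C = 2 * k choose k"
  have "C dvd fact (2 * k)"
    using binomial_fact_lemma[of k "2 * k"] by (metis C_def dvd_triv_right le_add2 mult_2)
  then have factors: "prime_factors C \<subseteq> {p. prime p \<and> p \<le> 2 * k}"
    by (auto simp: in_prime_factors_iff) (meson dvd_trans prime_dvd_fact_iff)
  have "C = (\<Prod>p\<in>prime_factors C. p ^ multiplicity p C)"
    by (rule prime_factorization_nat) (simp add: C_def)
  also have "\<dots> \<le> (\<Prod>p\<in>prime_factors C. 2 * k)"
    using prime_power_multiplicity_central_binomial_le k
    by (intro prod_mono) (auto simp: C_def in_prime_factors_iff)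
  also have "\<dots> = (2 * k) ^ card (prime_factors C)" by simp
  also have "\<dots> \<le> (2 * k) ^ card {p. prime p \<and> p \<le> 2 * k}"
    using k factors by (intro power_increasing card_mono) auto
  finally show ?thesis unfolding C_def .
qed

lemma four_power_le_central_binomial:
  fixes k :: nat
  shows "4 ^ k \<le> (2 * k + 1) * (2 * k choose k)"
proof -
  have "4 ^ k = (2::nat) ^ (2 * k)" by (simp add: power_mult)
  also have "\<dots> = (\<Sum>j\<le>2*k. 2 * k choose j)" by (simp add: choose_row_sum)
  also have "\<dots> \<le> (\<Sum>j\<le>2*k. 2 * k choose k)"
    by (intro sum_mono) (metis binomial_maximum nonzero_mult_div_cancel_left zero_neq_numeral)
  finally show ?thesis by simp
qed

lemma two_mult_square_add_one_less_four_power: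
  fixes N :: nat
  shows "1 \<le> N \<Longrightarrow> 2 * N^2 + 1 < 4 ^ N"
proof (induction N rule: nat_induct_at_least)
  case (Suc N)
  have "N \<le> N * N" using Suc.hyps by simp
  then have "4 * N \<le> 6 * (N * N)" by linarith
  have "2 * (Suc N)^2 + 1 = 2 * (N * N) + 4 * N + 3" by (simp add: power2_eq_square)
  also have "\<dots> \<le> 8 * (N * N) + 4" using \<open>4 * N \<le> 6 * (N * N)\<close> by linarith
  also have "\<dots> = 4 * (2 * N^2 + 1)" by (simp add: power2_eq_square)
  also have "\<dots> < 4 * 4 ^ N" using Suc.IH by simp
  finally show ?case by simp
qed simp

lemma card_primes_le_two_mult_square:
  fixes N :: nat
  shows "N \<le> card {p. prime p \<and> p \<le> 2 * N^2}"
proof (rule ccontr)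
  assume contra: "\<not> N \<le> card {p. prime p \<and> p \<le> 2 * N^2}"
  define k where "k = N^2"
  define c where "c = card {p. prime p \<and> p \<le> 2 * k}"
  have c: "c + 1 \<le> N" using contra by (simp add: c_def k_def)
  then have N: "1 \<le> N" by simp
  then have k: "1 \<le> k" by (simp add: k_def)
  have "4 ^ k \<le> (2 * k + 1) * (2 * k choose k)" by (rule four_power_le_central_binomial)
  also have "\<dots> \<le> (2 * k + 1) * (2 * k) ^ c"
    by (rule mult_le_mono2) (rule central_binomial_le_power_card_primes[OF k, folded c_def])
  also have "\<dots> \<le> (2 * k + 1) * (2 * k + 1) ^ c" by (rule mult_le_mono2) (rule power_mono; simp)
  also have "\<dots> = (2 * k + 1) ^ (c + 1)" by simp
  also have "\<dots> \<le> (2 * k + 1) ^ N" by (rule power_increasing[OF c]) simp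
  also have "\<dots> < (4 ^ N) ^ N"
    using two_mult_square_add_one_less_four_power[OF N] N unfolding k_def by (intro power_strict_mono) auto
  also have "\<dots> = 4 ^ k" unfolding k_def by (simp add: power2_eq_square flip: power_mult)
  finally show False by simp
qed

section \<open>The first \<open>N\<close> primes\<close>

definition prime_index :: "nat \<Rightarrow> nat" where
  "prime_index p = card {q. prime q \<and> q < p}"

lemma prime_index_strict_mono_on: "strict_mono_on {p. prime p} prime_index"
proof (rule strict_mono_onI)
  fix p p' :: nat
  assume "p \<in> {p. prime p}" and "p < p'"
  then have "{q. prime q \<and> q < p} \<subset> {q. prime q \<and> q < p'}" by auto
  then show "prime_index p < prime_index p'"
    unfolding prime_index_def by (rule psubset_card_mono[rotated]) simp
qed

lemma prime_index_two: "prime_index 2 = 0"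
proof -
  have "{q. prime q \<and> q < (2::nat)} = {}" using prime_ge_2_nat by (auto simp: not_less)
  then show ?thesis by (simp add: prime_index_def)
qed

lemma ex_prime_index_eq: "\<exists>p. prime p \<and> prime_index p = k"
proof (induction k)
  case 0
  show ?case using prime_index_two by (intro exI[of _ 2]) simp
next
  case (Suc k)
  then obtain p where p: "prime p" "prime_index p = k" by blast
  define p' where "p' = (LEAST q. prime q \<and> p < q)"
  have p': "prime p' \<and> p < p'"
    unfolding p'_def by (rule LeastI_ex) (rule bigger_prime)
  have "p' \<le> q" if "prime q" "p < q" for q
    unfolding p'_def by (rule Least_le) (use that in simp)
  then have "{q. prime q \<and> q < p'} = insert p {q. prime q \<and> q < p}"
    using p p' by (auto simp: not_less[symmetric]) (meson linorder_neqE_nat)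
  then have "prime_index p' = Suc k" using p by (simp add: prime_index_def)
  then show ?case using p' by blast
qed

lemma first_primes_conv_prime_index: "first_primes N = {p. prime p \<and> prime_index p < N}"
  by (simp add: first_primes_def prime_index_def)

lemma bij_betw_prime_index_first_primes: "bij_betw prime_index (first_primes N) {..<N}"
proof (rule bij_betw_imageI)
  show "inj_on prime_index (first_primes N)"
    using strict_mono_on_imp_inj_on[OF prime_index_strict_mono_on]
    by (rule inj_on_subset) (auto simp: first_primes_def)
  show "prime_index ` first_primes N = {..<N}"
  proof
    show "prime_index ` first_primes N \<subseteq> {..<N}" by (auto simp: first_primes_conv_prime_index)
    show "{..<N} \<subseteq> prime_index ` first_primes N"
    proof
      fix k assume "k \<in> {..<N}"
      moreover obtain p where "prime p" "prime_index p = k" using ex_prime_index_eq by blast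
      ultimately show "k \<in> prime_index ` first_primes N"
        by (intro image_eqI[of _ _ p]) (auto simp: first_primes_conv_prime_index)
    qed
  qed
qed

lemma finite_first_primes [simp]: "finite (first_primes N)"
  using bij_betw_finite[OF bij_betw_prime_index_first_primes] by simp

lemma card_first_primes [simp]: "card (first_primes N) = N"
  using bij_betw_same_card[OF bij_betw_prime_index_first_primes] by simp

lemma prime_of_mem_first_primes: "p \<in> first_primes N \<Longrightarrow> prime p"
  by (simp add: first_primes_def)

lemma two_mem_first_primes: "1 \<le> N \<Longrightarrow> 2 \<in> first_primes N"
  by (simp add: first_primes_conv_prime_index prime_index_two)

lemma first_primes_le_two_mult_square:
  assumes "p \<in> first_primes N"
  shows "p \<le> 2 * N^2"
proof (rule ccontr)
  assume "\<not> p \<le> 2 * N^2"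
  then have "card {q. prime q \<and> q \<le> 2 * N^2} \<le> card {q. prime q \<and> q < p}"
    by (intro card_mono) auto
  moreover have "card {q. prime q \<and> q < p} < N" using assms by (simp add: first_primes_def)
  ultimately show False using card_primes_le_two_mult_square[of N] by linarith
qed

lemma prod_le_two_mult_square_power:
  assumes "S \<subseteq> first_primes N"
  shows "\<Prod>S \<le> (2 * N^2) ^ N"
proof (cases "N = 0")
  case True
  then show ?thesis using assms card_0_eq[OF finite_first_primes[of 0]] by simp
next
  case False
  have "\<Prod>S \<le> (\<Prod>p\<in>S. 2 * N^2)"
    using assms first_primes_le_two_mult_square by (intro prod_mono) auto
  also have "\<dots> = (2 * N^2) ^ card S" by simp
  also have "\<dots> \<le> (2 * N^2) ^ N"
    using False assms card_mono[OF finite_first_primes assms] by (intro power_increasing) auto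
  finally show ?thesis .
qed

lemma five_mult_square_mult_two_power_le_three_power:
  fixes K :: nat
  shows "30 \<le> K \<Longrightarrow> 5 * K^2 * 2^K \<le> 3 ^ K"
proof (induction K rule: nat_induct_at_least)
  case (Suc K)
  have "30 * K \<le> K * K" using Suc.hyps by simp
  then have "4 * K + 2 \<le> K * K" using Suc.hyps by linarith
  then have "2 * (Suc K)^2 \<le> 3 * K^2" by (simp add: power2_eq_square algebra_simps)
  then have "5 * (Suc K)^2 * 2 ^ Suc K \<le> 3 * (5 * K^2 * 2^K)" by simp
  also have "\<dots> \<le> 3 * 3 ^ K" using Suc.IH by simp
  finally show ?case by simp
qed simp

lemma two_mult_square_power_le_exp:
  fixes K n :: nat
  assumes K: "30 \<le> K" and nK: "n \<le> K"
  defines "N \<equiv> 2 ^ K * n"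
  shows "real ((2 * N^2) ^ N) \<le> exp (3 ^ K)"
proof -
  have "n \<le> 2 ^ K" using nK less_exp[of K] by linarith
  then have "N \<le> 2 ^ K * 2 ^ K" by (simp add: N_def)
  then have "2 * N^2 \<le> 2 * (2 ^ K * 2 ^ K)^2" by (simp add: power_mono)
  also have "\<dots> = 2 ^ (4 * K + 1)" by (simp add: power2_eq_square flip: power_add)
  also have "\<dots> \<le> 2 ^ (5 * K)" using K by (intro power_increasing) auto
  finally have "(2 * N^2) ^ N \<le> (2 ^ (5 * K)) ^ N" by (rule power_mono) simp
  also have "\<dots> = 2 ^ (5 * K * N)" by (simp add: power_mult)
  also have "\<dots> \<le> 2 ^ (3 ^ K)"
  proof (rule power_increasing)
    have "5 * K * N \<le> 5 * K^2 * 2^K" using nK by (simp add: N_def power2_eq_square)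
    also have "\<dots> \<le> 3 ^ K" using K by (rule five_mult_square_mult_two_power_le_three_power)
    finally show "5 * K * N \<le> 3 ^ K" .
  qed simp
  finally have "real ((2 * N^2) ^ N) \<le> real (2 ^ (3 ^ K))" by (simp only: of_nat_le_iff)
  also have "\<dots> = 2 ^ (3 ^ K)" by simp
  also have "\<dots> \<le> exp 1 ^ (3 ^ K)"
    using exp_ge_add_one_self[of 1] by (intro power_mono) auto
  also have "\<dots> = exp (3 ^ K)" by (simp flip: exp_of_nat_mult)
  finally show ?thesis .
qed

section \<open>Fair coins\<close>

abbreviation fair_coins :: "'a set \<Rightarrow> ('a \<Rightarrow> bool) pmf" where
  "fair_coins A \<equiv> Pi_pmf A False (\<lambda>_. bernoulli_pmf (1/2))"

lemma map_pmf_flip_fair_coins: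
  assumes "finite A" and "x \<in> A"
  shows "map_pmf (\<lambda>w. w(x := \<not> w x)) (fair_coins A) = fair_coins A"
proof -
  let ?S = "PiE_dflt A False (\<lambda>_. UNIV :: bool set)"
  let ?flip = "\<lambda>w::'a \<Rightarrow> bool. w(x := \<not> w x)"
  have uniform: "fair_coins A = pmf_of_set ?S"
    using assms(1) by (simp add: bernoulli_pmf_half_conv_pmf_of_set Pi_pmf_of_set)
  have "map_pmf ?flip (pmf_of_set ?S) = pmf_of_set ?S"
  proof (rule map_pmf_of_set_bij_betw)
    show "bij_betw ?flip ?S ?S"
      using assms(2)
      by (intro bij_betw_byWitness[where f' = ?flip]) (auto simp: PiE_dflt_def split: if_split_asm)
    show "?S \<noteq> {}" by (auto simp: PiE_dflt_def)
    show "finite ?S" using assms(1) by (intro finite_PiE_dflt) auto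
  qed
  then show ?thesis by (simp only: uniform)
qed

lemma prob_fair_coins_le_half:
  assumes "finite A" and "x \<in> A"
    and flip_escapes: "\<And>w. w \<in> E \<Longrightarrow> w(x := \<not> w x) \<in> E \<Longrightarrow> False"
  shows "measure_pmf.prob (fair_coins A) E \<le> 1/2"
proof -
  let ?flip = "\<lambda>w::'a \<Rightarrow> bool. w(x := \<not> w x)"
  let ?P = "measure_pmf.prob (fair_coins A)"
  have "?P (?flip -` E) = ?P E"
    using measure_map_pmf[of ?flip "fair_coins A" E] map_pmf_flip_fair_coins[OF assms(1,2)] by simp
  moreover have "E \<inter> ?flip -` E = {}" using flip_escapes by auto
  then have "?P (E \<union> ?flip -` E) = ?P E + ?P (?flip -` E)"
    by (intro measure_pmf.finite_measure_Union) auto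
  moreover have "?P (E \<union> ?flip -` E) \<le> 1" by (rule measure_pmf.prob_le_1)
  ultimately show ?thesis by simp
qed

lemma prob_fair_coins_all:
  assumes "finite A" and "K \<subseteq> A"
  shows "measure_pmf.prob (fair_coins A) {w. \<forall>x\<in>K. w x} = (1/2) ^ card K"
proof -
  define B where "B x = (if x \<in> K then {True} else UNIV)" for x
  have "{w. \<forall>x\<in>K. w x} = Pi A B" using assms(2) by (auto simp: B_def Pi_def)
  then have "measure_pmf.prob (fair_coins A) {w. \<forall>x\<in>K. w x}
      = (\<Prod>x\<in>A. measure_pmf.prob (bernoulli_pmf (1/2)) (B x))"
    using measure_Pi_pmf_Pi[OF assms(1)] by simp
  also have "\<dots> = (\<Prod>x\<in>A. if x \<in> K then 1/2 else 1)"
    by (intro prod.cong) (auto simp: B_def measure_pmf_single)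
  also have "\<dots> = (1/2) ^ card K"
    using assms by (simp add: prod.If_cases Int_absorb1)
  finally show ?thesis .
qed

lemma indep_vars_fair_coins_blocks:
  fixes K :: "'l \<Rightarrow> 'a set" and g :: "'l \<Rightarrow> ('a \<Rightarrow> bool) \<Rightarrow> 'b"
  assumes A: "finite A" and K: "\<And>l. l \<in> L \<Longrightarrow> K l \<subseteq> A" "disjoint_family_on K L"
    and g: "\<And>l w w'. l \<in> L \<Longrightarrow> (\<And>x. x \<in> K l \<Longrightarrow> w x = w' x) \<Longrightarrow> g l w = g l w'"
  shows "prob_space.indep_vars (measure_pmf (fair_coins A)) (\<lambda>_. count_space UNIV) g L"
proof -
  let ?M = "measure_pmf (fair_coins A)"
  have "prob_space.indep_vars ?M (\<lambda>_. count_space UNIV) (\<lambda>x w. w x) A"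
    by (rule indep_vars_Pi_pmf[OF A])
  then have "prob_space.indep_vars ?M (\<lambda>l. PiM (K l) (\<lambda>_. count_space UNIV))
      (\<lambda>l w. restrict (\<lambda>x. w x) (K l)) L"
    using K by (rule prob_space.indep_vars_restrict[OF measure_pmf.prob_space_axioms])
  moreover have "g l \<in> PiM (K l) (\<lambda>_. count_space UNIV) \<rightarrow>\<^sub>M count_space UNIV" if "l \<in> L" for l
  proof -
    have "finite (K l)" using K(1)[OF that] A by (rule finite_subset)
    then show ?thesis by (simp add: count_space_PiM_finite)
  qed
  ultimately have restricted: "prob_space.indep_vars ?M (\<lambda>_. count_space UNIV)
      (\<lambda>l w. g l (restrict (\<lambda>x. w x) (K l))) L"
    by (rule prob_space.indep_vars_compose2[OF measure_pmf.prob_space_axioms])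
  show ?thesis
  proof (rule iffD1[OF prob_space.indep_vars_cong[OF measure_pmf.prob_space_axioms] restricted])
    show "(\<lambda>w. g l (restrict (\<lambda>x. w x) (K l))) = g l" if "l \<in> L" for l
      using that by (intro ext g) auto
  qed auto
qed

section \<open>The random matrix\<close>

text \<open>Flipping the coin of one prime \<open>q\<close> multiplies or divides the product by \<open>q\<close>. Taking \<open>q = p\<close>
  if \<open>p \<in> P\<close> and \<open>q = 2\<close> otherwise, the other factor is prime to \<open>p\<close> and \<open>q \<not>\<equiv> 1 (mod p)\<close>,
  so the flip always changes the residue mod \<open>p\<close>.\<close>
lemma prob_prod_fair_coins_cong_le_half:
  fixes P :: "nat set" and f :: "nat \<Rightarrow> 'a" and p :: nat and r :: int
  assumes A: "finite A" and P: "finite P" "\<And>q. q \<in> P \<Longrightarrow> prime q" "2 \<in> P"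
    and f: "inj_on f P" "f ` P \<subseteq> A" and p: "prime p"
  shows "measure_pmf.prob (fair_coins A) {w. [(\<Prod>q\<in>{q\<in>P. w (f q)}. int q) = r] (mod int p)} \<le> 1/2"
proof -
  define q where "q = (if p \<in> P then p else 2)"
  define R where "R w = (\<Prod>q'\<in>{q'\<in>P - {q}. w (f q')}. int q')" for w :: "'a \<Rightarrow> bool"
  have q: "q \<in> P" using P(3) by (simp add: q_def)
  have split: "(\<Prod>q'\<in>{q'\<in>P. w (f q')}. int q') = (if w (f q) then int q else 1) * R w" for w
  proof (cases "w (f q)")
    case True
    then have "{q'\<in>P. w (f q')} = insert q {q'\<in>P - {q}. w (f q')}" using q by auto
    then show ?thesis using True P(1) by (simp add: R_def)
  next
    case False
    then have "{q'\<in>P. w (f q')} = {q'\<in>P - {q}. w (f q')}" by auto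
    then show ?thesis using False by (simp add: R_def)
  qed
  have R_flip: "R (w(f q := \<not> w (f q))) = R w" for w
  proof -
    have "{q'\<in>P - {q}. (w(f q := \<not> w (f q))) (f q')} = {q'\<in>P - {q}. w (f q')}"
      using q by (auto simp: inj_on_eq_iff[OF f(1)])
    then show ?thesis by (simp add: R_def)
  qed
  have p_int: "prime (int p)" using p by simp
  have not_dvd_R: "\<not> int p dvd R w" for w
  proof
    assume "int p dvd R w"
    then obtain q' where "q' \<in> P - {q}" "int p dvd int q'"
      using P(1) by (auto simp: R_def prime_dvd_prod_iff[OF _ p_int])
    then have "p = q'" using p P(2) by (simp add: primes_dvd_imp_eq)
    with \<open>q' \<in> P - {q}\<close> show False by (simp add: q_def split: if_splits)
  qed
  have not_dvd_q: "\<not> int p dvd int q - 1"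
  proof
    assume dvd: "int p dvd int q - 1"
    have "int p dvd 1"
    proof (cases "p \<in> P")
      case True
      have "int p dvd int p - (int q - 1)" by (rule dvd_diff[OF dvd_refl dvd])
      then show ?thesis using True by (simp add: q_def)
    next
      case False
      then show ?thesis using dvd by (simp add: q_def)
    qed
    then show False using p_int by (simp add: prime_int_iff)
  qed
  show ?thesis
  proof (rule prob_fair_coins_le_half[OF A])
    show "f q \<in> A" using f(2) q by auto
    fix w
    assume "w \<in> {w. [(\<Prod>q\<in>{q\<in>P. w (f q)}. int q) = r] (mod int p)}"
      and "w(f q := \<not> w (f q)) \<in> {w. [(\<Prod>q\<in>{q\<in>P. w (f q)}. int q) = r] (mod int p)}"
    then have "[int q * R w = R w] (mod int p)"
      using split[of w] split[of "w(f q := \<not> w (f q))"] R_flip[of w]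
      by (cases "w (f q)") (auto intro: cong_trans cong_sym)
    then have "int p dvd (int q - 1) * R w" by (simp add: cong_iff_dvd_diff algebra_simps)
    then show False using not_dvd_R not_dvd_q p_int by (simp add: prime_dvd_mult_iff)
  qed
qed

lemma eps_balanced_rand_entry:
  assumes "i < n" and "j < m"
  shows "eps_balanced (1/2) (map_pmf (\<lambda>w. rand_entry n m w i j) (coin_space n m))"
  unfolding eps_balanced_def
proof (intro allI impI)
  fix p :: nat and r :: int
  assume "prime p"
  have "1 \<le> 2 ^ (n * m) * n" using assms by simp
  then have "measure_pmf.prob (coin_space n m) {w. [rand_entry n m w i j = r] (mod int p)} \<le> 1/2"
    unfolding coin_space_def rand_entry_def using \<open>prime p\<close> assms
    by (intro prob_prod_fair_coins_cong_le_half)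
      (auto simp: inj_on_def two_mem_first_primes prime_of_mem_first_primes)
  then show "measure_pmf.prob (map_pmf (\<lambda>w. rand_entry n m w i j) (coin_space n m))
      {y. [y = r] (mod int p)} \<le> 1 - 1/2"
    by (simp add: vimage_def)
qed

lemma indep_vars_rand_entry:
  "prob_space.indep_vars (measure_pmf (coin_space n m)) (\<lambda>_. count_space UNIV)
     (\<lambda>(i, j) w. rand_entry n m w i j) ({..<n} \<times> {..<m})"
  unfolding coin_space_def
proof (rule indep_vars_fair_coins_blocks[where K = "\<lambda>(i, j). {i} \<times> {j} \<times> first_primes (2 ^ (n * m) * n)"])
  fix l and w w' :: "nat \<times> nat \<times> nat \<Rightarrow> bool"
  assume "\<And>x. x \<in> (case l of (i, j) \<Rightarrow> {i} \<times> {j} \<times> first_primes (2 ^ (n * m) * n)) \<Longrightarrow> w x = w' x"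
  then show "(case l of (i, j) \<Rightarrow> \<lambda>w. rand_entry n m w i j) w = (case l of (i, j) \<Rightarrow> \<lambda>w. rand_entry n m w i j) w'"
    by (cases l) (auto simp: rand_entry_def intro!: prod.cong)
qed (auto simp: disjoint_family_on_def)

lemma eps_balanced_matrix_rand_entry:
  "eps_balanced_matrix (1/2) (coin_space n m) n m (rand_entry n m)"
  using indep_vars_rand_entry eps_balanced_rand_entry by (simp add: eps_balanced_matrix_def)

lemma abs_rand_entry_le_exp:
  assumes "30 \<le> n" and "n \<le> m"
  shows "\<bar>real_of_int (rand_entry n m w i j)\<bar> \<le> exp (3 ^ (n * m))"
proof -
  define N where "N = 2 ^ (n * m) * n"
  have "rand_entry n m w i j = int (\<Prod>{p \<in> first_primes N. w (i, j, p)})"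
    by (simp add: rand_entry_def N_def)
  then have "\<bar>real_of_int (rand_entry n m w i j)\<bar> = real (\<Prod>{p \<in> first_primes N. w (i, j, p)})"
    by (simp only: of_int_of_nat_eq abs_of_nonneg of_nat_0_le_iff)
  also have "\<dots> \<le> real ((2 * N^2) ^ N)"
    by (subst of_nat_le_iff) (intro prod_le_two_mult_square_power; auto)
  also have "\<dots> \<le> exp (3 ^ (n * m))"
  proof -
    have "n \<le> n * m" using assms by simp
    then have "30 \<le> n * m" using assms by linarith
    then show ?thesis unfolding N_def using \<open>n \<le> n * m\<close> by (rule two_mult_square_power_le_exp)
  qed
  finally show ?thesis .
qed

lemma int_mat_surj_row_dvd_imp_unit:
  assumes "int_mat_surj n m A" and "i < n" and "\<And>j. j < m \<Longrightarrow> d dvd A i j"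
  shows "is_unit d"
proof -
  obtain x where "\<forall>i<n. (\<Sum>j<m. A i j * x j) = 1"
    using spec[OF assms(1)[unfolded int_mat_surj_def], of "\<lambda>_. 1"] by auto
  then have "(\<Sum>j<m. A i j * x j) = 1" using assms(2) by simp
  moreover have "d dvd (\<Sum>j<m. A i j * x j)" by (intro dvd_sum dvd_mult2 assms(3)) simp
  ultimately show ?thesis by simp
qed

lemma prob_first_row_not_all_true:
  fixes P :: "nat set" and n m :: nat
  assumes "finite P" and "1 \<le> n"
  shows "measure_pmf.prob (fair_coins ({..<n} \<times> {..<m} \<times> P)) {w. \<forall>p\<in>P. \<exists>j<m. \<not> w (0, j, p)}
      = (1 - (1/2) ^ m) ^ card P"
proof (cases "P = {}")
  case False
  let ?A = "{..<n} \<times> {..<m} \<times> P"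
  let ?M = "measure_pmf (fair_coins ?A)"
  define K where "K p = {0::nat} \<times> {..<m} \<times> {p}" for p :: nat
  have A: "finite ?A" using assms(1) by simp
  have KA: "K p \<subseteq> ?A" if "p \<in> P" for p using that assms(2) by (auto simp: K_def)
  define row where "row p w \<longleftrightarrow> (\<exists>j<m. \<not> w (0, j, p))" for p and w :: "nat \<times> nat \<times> nat \<Rightarrow> bool"
  have "prob_space.indep_vars ?M (\<lambda>_. count_space UNIV) row P"
    using A KA by (rule indep_vars_fair_coins_blocks) (auto simp: K_def row_def disjoint_family_on_def)
  then have "measure_pmf.prob (fair_coins ?A) (\<Inter>p\<in>P. row p -` {True} \<inter> space ?M)
      = (\<Prod>p\<in>P. measure_pmf.prob (fair_coins ?A) (row p -` {True} \<inter> space ?M))"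
    using False assms(1) by (rule prob_space.indep_varsD_finite[OF measure_pmf.prob_space_axioms]) auto
  then have "measure_pmf.prob (fair_coins ?A) (\<Inter>p\<in>P. {w. \<exists>j<m. \<not> w (0, j, p)})
      = (\<Prod>p\<in>P. measure_pmf.prob (fair_coins ?A) {w. \<exists>j<m. \<not> w (0, j, p)})"
    by (simp add: row_def vimage_def)
  also have "\<dots> = (\<Prod>p\<in>P. 1 - (1/2) ^ m)"
  proof (intro prod.cong refl)
    fix p assume "p \<in> P"
    have "card (K p) = m" by (simp add: K_def card_cartesian_product)
    have "{w. \<exists>j<m. \<not> w (0, j, p)} = UNIV - {w. \<forall>x\<in>K p. w x}" by (auto simp: K_def)
    then show "measure_pmf.prob (fair_coins ?A) {w. \<exists>j<m. \<not> w (0, j, p)} = 1 - (1/2) ^ m"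
      using prob_fair_coins_all[OF A KA[OF \<open>p \<in> P\<close>]] \<open>card (K p) = m\<close>
        measure_pmf.prob_compl[of "{w. \<forall>x\<in>K p. w x}" "fair_coins ?A"]
      by simp
  qed
  finally have prob_inter: "measure_pmf.prob (fair_coins ?A) (\<Inter>p\<in>P. {w. \<exists>j<m. \<not> w (0, j, p)})
      = (1 - (1/2) ^ m) ^ card P" by simp
  have inter_eq: "(\<Inter>p\<in>P. {w. \<exists>j<m. \<not> w (0, j, p)}) = {w. \<forall>p\<in>P. \<exists>j<m. \<not> w (0, j, p)}"
    by auto
  from prob_inter show ?thesis unfolding inter_eq .
qed simp

lemma prob_int_mat_surj_rand_entry_le:
  assumes n: "1 \<le> n"
  shows "measure_pmf.prob (coin_space n m) {w. int_mat_surj n m (rand_entry n m w)} \<le> exp (- real n)"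
proof -
  define N where "N = 2 ^ (n * m) * n"
  define P where "P = first_primes N"
  have "{w. int_mat_surj n m (rand_entry n m w)} \<subseteq> {w. \<forall>p\<in>P. \<exists>j<m. \<not> w (0, j, p)}"
  proof (intro subsetI CollectI ballI, rule ccontr)
    fix w p
    assume "w \<in> {w. int_mat_surj n m (rand_entry n m w)}" and "p \<in> P"
      and "\<not> (\<exists>j<m. \<not> w (0, j, p))"
    then have "is_unit (int p)"
      using n by (intro int_mat_surj_row_dvd_imp_unit[of n m "rand_entry n m w" 0])
        (auto simp: rand_entry_def P_def N_def intro: dvd_prodI)
    moreover have "prime (int p)"
      using \<open>p \<in> P\<close> by (simp add: P_def prime_of_mem_first_primes)
    ultimately show False using not_prime_unit by blast
  qed
  then have "measure_pmf.prob (coin_space n m) {w. int_mat_surj n m (rand_entry n m w)}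
      \<le> measure_pmf.prob (fair_coins ({..<n} \<times> {..<m} \<times> P)) {w. \<forall>p\<in>P. \<exists>j<m. \<not> w (0, j, p)}"
    unfolding coin_space_def P_def N_def by (rule measure_pmf.finite_measure_mono) simp
  also have "\<dots> = (1 - (1/2) ^ m) ^ N"
    using prob_first_row_not_all_true[of P n m] n by (simp add: P_def)
  also have "\<dots> \<le> exp (- ((1/2) ^ m)) ^ N"
    using exp_ge_add_one_self[of "- ((1/2) ^ m)"] by (intro power_mono) (auto simp: power_le_one)
  also have "\<dots> = exp (- (real N / 2 ^ m))" by (simp add: field_simps flip: exp_of_nat_mult)
  also have "\<dots> \<le> exp (- real n)"
  proof -
    have "real n * 2 ^ m \<le> real n * 2 ^ (n * m)"
      using n by (intro mult_left_mono power_increasing) auto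
    then have "real n \<le> real N / 2 ^ m" by (simp add: N_def field_simps)
    then show ?thesis by simp
  qed
  finally show ?thesis .
qed

theorem mainTheorem5:
  shows "(\<forall>n m. 1 \<le> n \<longrightarrow> n \<le> m \<longrightarrow>
            eps_balanced_matrix (1/2) (coin_space n m) n m (rand_entry n m))
       \<and> (\<exists>n0. \<forall>n\<ge>n0. \<forall>m\<ge>n.
            AE w in measure_pmf (coin_space n m).
              \<forall>i<n. \<forall>j<m. \<bar>real_of_int (rand_entry n m w i j)\<bar> \<le> exp (3 ^ (n * m)))
       \<and> (\<forall>n m. 1 \<le> n \<longrightarrow> n \<le> m \<longrightarrow>
            measure_pmf.prob (coin_space n m) {w. int_mat_surj n m (rand_entry n m w)}
              \<le> exp (- real n))"
  using eps_balanced_matrix_rand_entry abs_rand_entry_le_exp prob_int_mat_surj_rand_entry_le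
  by (blast intro: AE_I2)

end
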